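(* Fix $\varepsilon\in(0,1/6)$ and $k=3$. Let $g:(0,\infty)\to(0,\infty)$ be any gradient function (any function of distance). There is no function $F:(0,\infty)^4\to\{1,2,3\}$ with the following property: for all $a,b>0$, the coloring of the rectangle $[0,a]\times[0,b]$ that assigns to the point $(x,y)$ the color $F\big(g(d_1),g(d_2),g(d_3),g(d_4)\big)$, where $d_1,\dots,d_4$ are the Euclidean distances from $(x,y)$ to the four corners $(0,0),(a,0),(0,b),(a,b)$, is an $\varepsilon$-approximate French flag. In other words, no algorithm in the concentration model with four point sources at the corners can produce an $\varepsilon$-approximate French flag for all flag dimensions.
   Context: Concentration model in 2D: four sources sit at the corners of the $a\times b$ flag (width $a$ along the $x$-axis, height $b$); each agent's only input is the measured concentration from each source, which is a function of its distance to that source; all agents run the same algorithm and have no other positional information (no coordinates, no knowledge of $a$ or $b$). A $k$-colored coloring of a flag of width $a$ is an $\varepsilon$-approximate flag if for every color $z\in\{1,\dots,k\}$ and every agent at $(x,y)$: (1) if $x\in[(\frac{z-1}{k}+\varepsilon)a,(\frac{z}{k}-\varepsilon)a]$ then the agent has color $z$; (2) if the agent has color $z$ then $x\in[(\frac{z-1}{k}-\varepsilon)a,(\frac{z}{k}+\varepsilon)a]$. For $k=3$ the colors are blue $=1$, white $=2$, red $=3$. *)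

theory Defs
  imports Complex_Main
begin

definition approx_flag ::
  "real \<Rightarrow> nat \<Rightarrow> real \<Rightarrow> (real \<times> real) set \<Rightarrow> (real \<Rightarrow> real \<Rightarrow> nat) \<Rightarrow> bool" where
  "approx_flag eps k a D col \<longleftrightarrow>
     (\<forall>z\<in>{1..k}. \<forall>(x, y)\<in>D.
        ((((real z - 1) / real k + eps) * a \<le> x \<and> x \<le> (real z / real k - eps) * a)
            \<longrightarrow> col x y = z) \<and>
        (col x y = z \<longrightarrow>
            (((real z - 1) / real k - eps) * a \<le> x \<and> x \<le> (real z / real k + eps) * a)))"

text \<open>Agents: all points of the rectangle [0,a] x [0,b] except the four corners
  (where some distance is 0 and the gradient function is undefined).\<close>
definition flag_points :: "real \<Rightarrow> real \<Rightarrow> (real \<times> real) set" where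
  "flag_points a b = {(x, y). 0 \<le> x \<and> x \<le> a \<and> 0 \<le> y \<and> y \<le> b \<and>
       (x, y) \<notin> {(0, 0), (a, 0), (0, b), (a, b)}}"

definition conc_coloring ::
  "(real \<Rightarrow> real \<Rightarrow> real \<Rightarrow> real \<Rightarrow> nat) \<Rightarrow> (real \<Rightarrow> real) \<Rightarrow> real \<Rightarrow> real \<Rightarrow> real \<Rightarrow> real \<Rightarrow> nat" where
  "conc_coloring F g a b x y =
     F (g (sqrt (x\<^sup>2 + y\<^sup>2))) (g (sqrt ((x - a)\<^sup>2 + y\<^sup>2)))
       (g (sqrt (x\<^sup>2 + (y - b)\<^sup>2))) (g (sqrt ((x - a)\<^sup>2 + (y - b)\<^sup>2)))"

end

theory Submission
  imports Defs
begin

text \<open>On the horizontal midline of a flag the two left corners, and likewise the two right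
  corners, are equidistant from an agent, so the agent only learns two distances. The point
  \<open>(1/6, h)\<close> of the \<open>1 \<times> 2h\<close> flag, which must be blue, and the point \<open>(h, 1/6)\<close> of the
  \<open>A \<times> 1/3\<close> flag with \<open>A\<^sup>2 - 2Ah = 2/3\<close> measure the same two distances and hence get the same
  colour. Taking \<open>A = 1/(1/6 - \<epsilon>)\<close> puts the second point beyond the blue stripe.\<close>

lemma mem_flag_points:
  assumes "0 < x" "x < a" "0 < y" "y < b"
  shows "(x, y) \<in> flag_points a b"
  using assms by (auto simp: flag_points_def)

lemma approx_flag_colour_inner:
  assumes "approx_flag eps k a D col" "(x, y) \<in> D" "z \<in> {1..k}"
    and "((real z - 1) / real k + eps) * a \<le> x" "x \<le> (real z / real k - eps) * a"
  shows "col x y = z"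
  using assms unfolding approx_flag_def by fast

lemma approx_flag_colour_le:
  assumes "approx_flag eps k a D col" "(x, y) \<in> D" "z \<in> {1..k}" "col x y = z"
  shows "x \<le> (real z / real k + eps) * a"
  using assms unfolding approx_flag_def by fast

lemma conc_coloring_midline_swap:
  assumes "(x - a)\<^sup>2 + y\<^sup>2 = (y - a')\<^sup>2 + x\<^sup>2"
  shows "conc_coloring F g a' (2 * x) y x = conc_coloring F g a (2 * y) x y"
proof -
  have "(x - 2 * x)\<^sup>2 = x\<^sup>2" "(y - 2 * y)\<^sup>2 = y\<^sup>2"
    by (simp_all add: power2_eq_square)
  then show ?thesis
    using assms by (simp add: conc_coloring_def add.commute)
qed

theorem theorem2:
  fixes eps :: real and g :: "real \<Rightarrow> real"
  assumes "0 < eps" and "eps < 1/6"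
    and "\<forall>d>0. g d > 0"
  shows "\<not> (\<exists>F :: real \<Rightarrow> real \<Rightarrow> real \<Rightarrow> real \<Rightarrow> nat.
            (\<forall>u1 u2 u3 u4. u1 > 0 \<longrightarrow> u2 > 0 \<longrightarrow> u3 > 0 \<longrightarrow> u4 > 0 \<longrightarrow>
                F u1 u2 u3 u4 \<in> {1, 2, 3}) \<and>
            (\<forall>a b. a > 0 \<longrightarrow> b > 0 \<longrightarrow>
                approx_flag eps 3 a (flag_points a b) (conc_coloring F g a b)))"
proof
  assume "\<exists>F. (\<forall>u1 u2 u3 u4. u1 > 0 \<longrightarrow> u2 > 0 \<longrightarrow> u3 > 0 \<longrightarrow> u4 > 0 \<longrightarrow>
                F u1 u2 u3 u4 \<in> {1, 2, 3}) \<and>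
            (\<forall>a b. a > 0 \<longrightarrow> b > 0 \<longrightarrow>
                approx_flag eps 3 a (flag_points a b) (conc_coloring F g a b))"
  then obtain F where flag: "\<And>a b. a > 0 \<Longrightarrow> b > 0 \<Longrightarrow>
      approx_flag eps 3 a (flag_points a b) (conc_coloring F g a b)" by blast
  define A where "A = 1 / (1/6 - eps)"
  define h where "h = A / 2 - 1 / (3 * A)"
  have "A > 6" using assms by (simp add: A_def field_simps)
  then have "0 < 1 / (3 * A)" and small: "1 / (3 * A) < 1" by (simp_all add: field_simps)
  then have "h > 1/6" "h < A" using \<open>A > 6\<close> unfolding h_def by linarith+
  have "conc_coloring F g 1 (2 * h) (1/6) h = 1"
    by (rule approx_flag_colour_inner[OF flag]) (use assms \<open>h > 1/6\<close> in \<open>auto intro: mem_flag_points\<close>)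
  moreover have "(1/6 - 1)\<^sup>2 + h\<^sup>2 = (h - A)\<^sup>2 + (1/6 :: real)\<^sup>2"
    using \<open>A > 6\<close> by (simp add: h_def power2_eq_square field_simps)
  ultimately have "conc_coloring F g A (2 * (1/6)) h (1/6) = 1"
    using conc_coloring_midline_swap by metis
  then have "h \<le> (1/3 + eps) * A"
    using approx_flag_colour_le[OF flag, of A "2 * (1/6)" h "1/6" 1]
      \<open>A > 6\<close> \<open>h > 1/6\<close> \<open>h < A\<close> by (force intro: mem_flag_points)
  moreover have "(1/3 + eps) * A = A / 2 - 1"
    using assms by (simp add: A_def field_simps)
  ultimately show False
    using small unfolding h_def by linarith
qed

end
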